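(* Let $(X_{1,\infty},f_{1,\infty},\mu_{1,\infty})$ be a metric nonautonomous dynamical system. Suppose each $X_n$ is a disjoint union $X_n=Y_n\,\dot\cup\, Z_n$ of measurable sets with $f_n(Y_n)\subset Y_{n+1}$, $f_n(Z_n)\subset Z_{n+1}$, and $\mu_n(Y_n)=c$ for all $n$, where $0<c\le1$ is a constant. Let $g_n=f_n|_{Y_n}:Y_n\to Y_{n+1}$ and $\nu_n(A)=\mu_n(A)/c$ for measurable $A\subset Y_n$, so that $(Y_{1,\infty},g_{1,\infty},\nu_{1,\infty})$ is a metric NDS. Let $\mathcal{E}$ be an admissible class for $f_{1,\infty}$ such that $\mathcal{P}_{1,\infty}\in\mathcal{E}$ implies $\{\mathcal{P}_n\vee\{Y_n,Z_n\}\}_{n\ge1}\in\mathcal{E}$. Then \[ \mathcal{E}|_{Y_{1,\infty}}:=\{\mathcal{Q}_{1,\infty}\;:\;\exists\,\mathcal{P}_{1,\infty}\in\mathcal{E}\text{ with }\mathcal{Q}_n=\{Y_n\}\vee\mathcal{P}_n\text{ for all }n\} \] is an admissible class for $(Y_{1,\infty},g_{1,\infty})$ and $c\,h_{\mathcal{E}|_{Y_{1,\infty}}}(g_{1,\infty})\le h_{\mathcal{E}}(f_{1,\infty})$. If $c=1$, equality holds.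
   Context: A metric NDS consists of probability spaces $(X_n,\mathcal{A}_n,\mu_n)$ and measurable maps $f_n:X_n\to X_{n+1}$ with $f_n\mu_n=\mu_{n+1}$. $f_k^n=f_{k+n-1}\circ\cdots\circ f_k$, $f_k^{-n}$ = preimage. $\{Y_n\}\vee\mathcal{P}_n$ denotes the partition $\{Y_n\cap P:P\in\mathcal{P}_n\}$ of $Y_n$. $H_\mu(\mathcal{P})=-\sum_P\mu(P)\log\mu(P)$; $h(f_{1,\infty};\mathcal{P}_{1,\infty})=\limsup_n\frac1nH_{\mu_1}(\bigvee_{i=0}^{n-1}f_1^{-i}\mathcal{P}_{i+1})$ (and analogously for $g_{1,\infty}$ with $\nu_1$); $h_{\mathcal{E}}(f_{1,\infty})=\sup_{\mathcal{P}_{1,\infty}\in\mathcal{E}}h(f_{1,\infty};\mathcal{P}_{1,\infty})$. Admissible class for an NDS $f_{1,\infty}$: a nonempty class $\mathcal{E}$ of sequences of finite measurable partitions $\{\mathcal{P}_n\}$ of $X_n$ such that (A) for each member, $\#\mathcal{P}_n\le N$ for some $N$ and all $n$; (B) $\mathcal{E}$ is closed under passing to termwise coarser sequences; (C) if $\mathcal{P}_{1,\infty}\in\mathcal{E}$ and $m\ge1$, then the sequence $\{\bigvee_{i=0}^{m-1}f_k^{-i}\mathcal{P}_{k+i}\}_{k\ge1}$ belongs to $\mathcal{E}$. *)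

theory Defs
  imports "HOL-Probability.Probability"
begin

text \<open>A metric nonautonomous dynamical system: probability spaces M n and
  measurable maps f n : M n \<rightarrow> M (n+1) pushing M n forward to M (n+1).
  Indices start at 0 (the paper starts at 1).\<close>
definition metric_NDS :: "(nat \<Rightarrow> 'a measure) \<Rightarrow> (nat \<Rightarrow> 'a \<Rightarrow> 'a) \<Rightarrow> bool" where
  "metric_NDS M f \<longleftrightarrow>
     (\<forall>n. prob_space (M n)) \<and>
     (\<forall>n. f n \<in> measurable (M n) (M (Suc n))) \<and>
     (\<forall>n. distr (M n) (M (Suc n)) (f n) = M (Suc n))"

primrec fiter :: "(nat \<Rightarrow> 'a \<Rightarrow> 'a) \<Rightarrow> nat \<Rightarrow> nat \<Rightarrow> 'a \<Rightarrow> 'a" where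
  "fiter f k 0 = id"
| "fiter f k (Suc i) = f (k + i) \<circ> fiter f k i"

text \<open>Finite measurable partition of the space of M (empty blocks are harmless).\<close>
definition is_partition :: "'a measure \<Rightarrow> 'a set set \<Rightarrow> bool" where
  "is_partition M P \<longleftrightarrow> finite P \<and> P \<subseteq> sets M \<and> disjoint P \<and> \<Union>P = space M"

definition coarser :: "'a set set \<Rightarrow> 'a set set \<Rightarrow> bool" where
  "coarser Q P \<longleftrightarrow> (\<forall>A\<in>P. \<exists>B\<in>Q. A \<subseteq> B)"

definition pjoin :: "'a set set \<Rightarrow> 'a set set \<Rightarrow> 'a set set" where
  "pjoin P Q = {A \<inter> B | A B. A \<in> P \<and> B \<in> Q}"

definition joinN :: "(nat \<Rightarrow> 'a measure) \<Rightarrow> (nat \<Rightarrow> 'a \<Rightarrow> 'a) \<Rightarrow> (nat \<Rightarrow> 'a set set)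
                      \<Rightarrow> nat \<Rightarrow> nat \<Rightarrow> 'a set set" where
  "joinN M f P k n =
     {space (M k) \<inter> (\<Inter>i\<in>{..<n}. fiter f k i -` S i) | S. \<forall>i<n. S i \<in> P (k + i)}"

definition part_entropy :: "'a measure \<Rightarrow> 'a set set \<Rightarrow> real" where
  "part_entropy M P = - (\<Sum>A\<in>P. measure M A * ln (measure M A))"

definition seq_entropy :: "(nat \<Rightarrow> 'a measure) \<Rightarrow> (nat \<Rightarrow> 'a \<Rightarrow> 'a) \<Rightarrow> (nat \<Rightarrow> 'a set set) \<Rightarrow> ereal" where
  "seq_entropy M f P = limsup (\<lambda>n. ereal (part_entropy (M 0) (joinN M f P 0 n) / real n))"

definition class_entropy :: "(nat \<Rightarrow> 'a measure) \<Rightarrow> (nat \<Rightarrow> 'a \<Rightarrow> 'a) \<Rightarrow> (nat \<Rightarrow> 'a set set) set \<Rightarrow> ereal" where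
  "class_entropy M f E = (SUP P\<in>E. seq_entropy M f P)"

definition admissible :: "(nat \<Rightarrow> 'a measure) \<Rightarrow> (nat \<Rightarrow> 'a \<Rightarrow> 'a) \<Rightarrow> (nat \<Rightarrow> 'a set set) set \<Rightarrow> bool" where
  "admissible M f E \<longleftrightarrow>
     E \<noteq> {} \<and>
     (\<forall>P\<in>E. \<forall>n. is_partition (M n) (P n)) \<and>
     (\<forall>P\<in>E. \<exists>N::nat. \<forall>n. card (P n) \<le> N) \<and>
     (\<forall>P\<in>E. \<forall>Q. (\<forall>n. is_partition (M n) (Q n) \<and> coarser (Q n) (P n)) \<longrightarrow> Q \<in> E) \<and>
     (\<forall>P\<in>E. \<forall>m\<ge>1. (\<lambda>k. joinN M f P k m) \<in> E)"

end

theory Submission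
  imports Defs
begin

text \<open>Restricting a partition sequence of \<open>X\<^sub>n\<close> to the invariant part \<open>Y\<^sub>n\<close> is compatible with
  iterated joins, because the orbit of a point of \<open>Y\<^sub>k\<close> stays in \<open>Y\<close>. Each block of the joined
  partition of \<open>Y\<^sub>0\<close> is also a block of the join of \<open>{P\<^sub>n \<or> {Y\<^sub>n, Z\<^sub>n}}\<close>, with \<open>\<mu>\<close>-measure \<open>c\<close>
  times its \<open>\<nu>\<close>-measure; since \<open>c \<phi>(x/c) \<le> \<phi>(x)\<close> for \<open>\<phi>(x) = -x ln x\<close> and \<open>c \<le> 1\<close>, this gives
  \<open>c H\<^sub>\<nu> \<le> H\<^sub>\<mu>\<close> for every \<open>n\<close>, hence for the entropies. If \<open>c = 1\<close> then \<open>Z\<^sub>0\<close> is a null set, so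
  intersecting with \<open>Y\<^sub>0\<close> does not change the measures of the blocks and the reverse inequality
  holds as well. Admissibility of the restricted class is inherited from that of \<open>\<E>\<close>; for
  closedness under coarsening, a coarser partition of \<open>Y\<^sub>n\<close> is extended to \<open>X\<^sub>n\<close> by gluing \<open>Z\<^sub>n\<close>
  to one of its blocks.\<close>

lemma fiter_in_invariant:
  assumes "\<And>n. f n ` Y n \<subseteq> Y (Suc n)" "x \<in> Y k"
  shows "fiter f k i x \<in> Y (k + i)"
  using assms by (induction i) auto

lemma Int_fiter_preimage_invariant:
  assumes "\<And>n. f n ` Y n \<subseteq> Y (Suc n)"
  shows "Y k \<inter> (\<Inter>i<m. fiter f k i -` (Y (k + i) \<inter> A i)) = Y k \<inter> (\<Inter>i<m. fiter f k i -` A i)"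
  using fiter_in_invariant[of f Y, OF assms] by blast

lemma measurable_fiter:
  assumes "metric_NDS M f"
  shows "fiter f k i \<in> measurable (M k) (M (k + i))"
proof (induction i)
  case (Suc i)
  have "f (k + i) \<in> measurable (M (k + i)) (M (Suc (k + i)))"
    using assms by (simp add: metric_NDS_def)
  with Suc show ?case by (simp add: measurable_comp)
qed simp

subsection \<open>Joins of partition sequences\<close>

lemma joinN_subset_space: "B \<in> joinN M f P k n \<Longrightarrow> B \<subseteq> space (M k)"
  unfolding joinN_def by blast

lemma finite_joinN:
  assumes "\<And>j. finite (P j)"
  shows "finite (joinN M f P k n)"
proof -
  let ?block = "\<lambda>S. space (M k) \<inter> (\<Inter>i<n. fiter f k i -` S i)"
  have "joinN M f P k n \<subseteq> ?block ` (\<Pi>\<^sub>E i\<in>{..<n}. P (k + i))"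
  proof
    fix B assume "B \<in> joinN M f P k n"
    then obtain S where S: "\<forall>i<n. S i \<in> P (k + i)" "B = ?block S"
      unfolding joinN_def by blast
    then have "B = ?block (restrict S {..<n})" by auto
    moreover have "restrict S {..<n} \<in> (\<Pi>\<^sub>E i\<in>{..<n}. P (k + i))" using S(1) by auto
    ultimately show "B \<in> ?block ` (\<Pi>\<^sub>E i\<in>{..<n}. P (k + i))" by blast
  qed
  moreover have "finite (\<Pi>\<^sub>E i\<in>{..<n}. P (k + i))" using assms by (intro finite_PiE) auto
  ultimately show ?thesis by (meson finite_imageI finite_subset)
qed

lemma disjoint_joinN:
  assumes "\<And>i. disjoint (P (k + i))"
  shows "disjoint (joinN M f P k n)"
proof (rule disjointI)
  fix B1 B2 assume "B1 \<in> joinN M f P k n" "B2 \<in> joinN M f P k n" "B1 \<noteq> B2"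
  then obtain S1 S2 where S1: "\<forall>i<n. S1 i \<in> P (k + i)" "B1 = space (M k) \<inter> (\<Inter>i<n. fiter f k i -` S1 i)"
    and S2: "\<forall>i<n. S2 i \<in> P (k + i)" "B2 = space (M k) \<inter> (\<Inter>i<n. fiter f k i -` S2 i)"
    unfolding joinN_def by blast
  have "\<exists>i<n. S1 i \<noteq> S2 i"
  proof (rule ccontr)
    assume "\<not> (\<exists>i<n. S1 i \<noteq> S2 i)"
    then have "(\<Inter>i<n. fiter f k i -` S1 i) = (\<Inter>i<n. fiter f k i -` S2 i)"
      by (intro INF_cong) auto
    with S1(2) S2(2) \<open>B1 \<noteq> B2\<close> show False by simp
  qed
  then obtain i where i: "i < n" "S1 i \<noteq> S2 i" by blast
  then have "S1 i \<inter> S2 i = {}" using assms[of i] S1(1) S2(1) by (auto simp: disjoint_def)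
  moreover have "B1 \<inter> B2 \<subseteq> fiter f k i -` (S1 i \<inter> S2 i)" using S1(2) S2(2) i(1) by blast
  ultimately show "B1 \<inter> B2 = {}" by blast
qed

lemma joinN_in_sets:
  assumes "metric_NDS M f" "\<And>i. P (k + i) \<subseteq> sets (M (k + i))" "B \<in> joinN M f P k n"
  shows "B \<in> sets (M k)"
proof -
  obtain S where S: "\<forall>i<n. S i \<in> P (k + i)" "B = space (M k) \<inter> (\<Inter>i<n. fiter f k i -` S i)"
    using assms(3) unfolding joinN_def by blast
  have preimage: "fiter f k i -` S i \<inter> space (M k) \<in> sets (M k)" if "i < n" for i
    using measurable_sets[OF measurable_fiter[OF assms(1)]] S(1) assms(2) that by blast
  show ?thesis
  proof (cases "n = 0")
    case False
    then have "B = (\<Inter>i<n. fiter f k i -` S i \<inter> space (M k))" using S(2) by auto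
    also have "\<dots> \<in> sets (M k)" using False preimage by (intro sets.finite_INT) auto
    finally show ?thesis .
  qed (use S(2) in simp)
qed

lemma joinN_mono:
  assumes "\<And>i. P (k + i) \<subseteq> R (k + i)"
  shows "joinN M f P k n \<subseteq> joinN M f R k n"
  using assms unfolding joinN_def by blast

text \<open>For \<open>n \<ge> 1\<close> the factor \<open>i = 0\<close> of a block is a block of \<open>Q k\<close> itself, so the ambient space
  does not matter.\<close>

lemma joinN_cong_space:
  assumes "n \<ge> 1" "\<And>A. A \<in> Q k \<Longrightarrow> A \<subseteq> space (M k)" "\<And>A. A \<in> Q k \<Longrightarrow> A \<subseteq> space (N k)"
  shows "joinN M f Q k n = joinN N f Q k n"
proof -
  have "space (M k) \<inter> (\<Inter>i<n. fiter f k i -` S i) = space (N k) \<inter> (\<Inter>i<n. fiter f k i -` S i)"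
    if "\<forall>i<n. S i \<in> Q (k + i)" for S
  proof -
    have "(\<Inter>i<n. fiter f k i -` S i) \<subseteq> S 0" using \<open>n \<ge> 1\<close> by (auto dest!: bspec[where x = 0])
    moreover have "S 0 \<in> Q k" using that[rule_format, of 0] \<open>n \<ge> 1\<close> by simp
    then have "S 0 \<subseteq> space (M k) \<inter> space (N k)" using assms(2,3) by blast
    ultimately show ?thesis by blast
  qed
  then show ?thesis unfolding joinN_def by blast
qed

subsection \<open>Extending a partition of a subset\<close>

definition glue_block :: "'a set \<Rightarrow> 'a set set \<Rightarrow> 'a set set" where
  "glue_block Z Q = (\<lambda>B. if B = (SOME B. B \<in> Q) then B \<union> Z else B) ` Q"

lemma is_partition_glue_block:
  assumes "finite Q" "disjoint Q" "\<Union> Q = Y" "Q \<noteq> {}" "Q \<subseteq> sets M"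
    and "Z \<in> sets M" "Y \<inter> Z = {}" "Y \<union> Z = space M"
  shows "is_partition M (glue_block Z Q)"
proof -
  let ?B0 = "SOME B. B \<in> Q"
  let ?g = "\<lambda>B. if B = ?B0 then B \<union> Z else B"
  have "disjoint (?g ` Q)"
  proof (rule disjointI)
    fix a b assume "a \<in> ?g ` Q" "b \<in> ?g ` Q" "a \<noteq> b"
    then obtain A B where AB: "A \<in> Q" "B \<in> Q" "a = ?g A" "b = ?g B" by blast
    with \<open>a \<noteq> b\<close> have "A \<noteq> B" by blast
    then have "A \<inter> B = {}" using assms(2) AB(1,2) by (simp add: disjoint_def)
    moreover have "A \<inter> Z = {}" "B \<inter> Z = {}" using assms(3,7) AB(1,2) by auto
    moreover have "?g A \<inter> ?g B \<subseteq> (A \<union> Z) \<inter> B \<union> A \<inter> (B \<union> Z)" using \<open>A \<noteq> B\<close> by auto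
    ultimately show "a \<inter> b = {}" using AB(3,4) by blast
  qed
  moreover have "\<Union> (?g ` Q) = space M"
  proof -
    have "?B0 \<in> Q" using assms(4) by (simp add: some_in_eq)
    moreover have "B \<subseteq> ?g B" "?g B \<subseteq> B \<union> Z" for B by auto
    moreover have "Z \<subseteq> ?g ?B0" by simp
    ultimately have "\<Union> (?g ` Q) = Y \<union> Z" using assms(3) by blast
    then show ?thesis using assms(8) by simp
  qed
  moreover have "?g ` Q \<subseteq> sets M" using assms(5,6) by auto
  moreover have "finite (?g ` Q)" using assms(1) by simp
  ultimately show ?thesis unfolding is_partition_def glue_block_def by (intro conjI)
qed

lemma Int_glue_block:
  assumes "\<Union> Q \<subseteq> Y" "Y \<inter> Z = {}"
  shows "(\<inter>) Y ` glue_block Z Q = Q"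
proof -
  have "Y \<inter> (if B = (SOME B. B \<in> Q) then B \<union> Z else B) = B" if "B \<in> Q" for B
    using assms that by auto
  then show ?thesis unfolding glue_block_def image_image by (simp cong: image_cong)
qed

lemma coarser_glue_block:
  assumes "Q \<noteq> {}" "coarser Q ((\<inter>) Y ` P)"
  shows "coarser (glue_block Z Q) (pjoin P {Y, Z})"
  unfolding coarser_def
proof
  let ?B0 = "SOME B. B \<in> Q"
  let ?g = "\<lambda>B. if B = ?B0 then B \<union> Z else B"
  have glued: "?g B \<in> glue_block Z Q" "B \<subseteq> ?g B" if "B \<in> Q" for B
    using that unfolding glue_block_def by auto
  fix A assume "A \<in> pjoin P {Y, Z}"
  then obtain A' where "A' \<in> P" and A: "A = A' \<inter> Y \<or> A = A' \<inter> Z"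
    by (auto simp: pjoin_def)
  then show "\<exists>B\<in>glue_block Z Q. A \<subseteq> B"
  proof (elim disjE)
    assume "A = A' \<inter> Y"
    moreover obtain B where "B \<in> Q" "Y \<inter> A' \<subseteq> B"
      using assms(2) \<open>A' \<in> P\<close> by (auto simp: coarser_def)
    ultimately show ?thesis using glued[of B] by blast
  next
    assume "A = A' \<inter> Z"
    then have "A \<subseteq> ?g ?B0" by auto
    moreover have "?B0 \<in> Q" using assms(1) by (simp add: some_in_eq)
    ultimately show ?thesis using glued(1) by blast
  qed
qed

subsection \<open>Partition entropy\<close>

lemma entropy_term_nonneg: "0 \<le> (x::real) \<Longrightarrow> x \<le> 1 \<Longrightarrow> 0 \<le> - (x * ln x)"
  by (cases "x = 0") (auto simp: mult_nonneg_nonpos)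

lemma entropy_term_scale:
  fixes x c :: real
  assumes "0 \<le> x" "0 < c" "c \<le> 1"
  shows "c * - (x / c * ln (x / c)) \<le> - (x * ln x)"
proof (cases "x = 0")
  case False
  with assms have "c * - (x / c * ln (x / c)) = - (x * ln x) + x * ln c"
    by (simp add: ln_div algebra_simps)
  moreover have "x * ln c \<le> 0" using assms by (simp add: mult_nonneg_nonpos)
  ultimately show ?thesis by linarith
qed simp

lemma part_entropy_sum: "part_entropy M P = (\<Sum>A\<in>P. - (measure M A * ln (measure M A)))"
  by (simp add: part_entropy_def sum_negf)

lemma (in prob_space) part_entropy_mono:
  assumes "finite Q" "P \<subseteq> Q"
  shows "part_entropy M P \<le> part_entropy M Q"
  unfolding part_entropy_sum using assms by (intro sum_mono2 entropy_term_nonneg) auto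

text \<open>Blocks of measure zero contribute nothing, so \<open>h\<close> only needs to be injective on the others.\<close>

lemma (in prob_space) part_entropy_le_image:
  assumes "finite J" "finite J'" "h ` J \<subseteq> J'"
    and "\<And>B. B \<in> J \<Longrightarrow> prob (h B) = prob B" and "inj_on h {B \<in> J. prob B \<noteq> 0}"
  shows "part_entropy M J \<le> part_entropy M J'"
proof -
  let ?J = "{B \<in> J. prob B \<noteq> 0}"
  let ?\<phi> = "\<lambda>A. - (prob A * ln (prob A))"
  have "part_entropy M J = (\<Sum>B\<in>?J. ?\<phi> B)"
    unfolding part_entropy_sum using assms(1) by (intro sum.mono_neutral_right) auto
  also have "\<dots> = (\<Sum>B\<in>?J. ?\<phi> (h B))" using assms(4) by simp
  also have "\<dots> = part_entropy M (h ` ?J)"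
    unfolding part_entropy_sum using sum.reindex[OF assms(5), of ?\<phi>] by simp
  also have "\<dots> \<le> part_entropy M J'" using assms(2,3) by (intro part_entropy_mono) auto
  finally show ?thesis .
qed

lemma part_entropy_scale:
  assumes "0 < c" "c \<le> 1" "\<And>A. A \<in> J \<Longrightarrow> measure N A = measure M A / c"
  shows "c * part_entropy N J \<le> part_entropy M J"
  unfolding part_entropy_sum sum_distrib_left
proof (rule sum_mono)
  fix A assume "A \<in> J"
  show "c * - (measure N A * ln (measure N A)) \<le> - (measure M A * ln (measure M A))"
    unfolding assms(3)[OF \<open>A \<in> J\<close>] by (rule entropy_term_scale[OF measure_nonneg assms(1,2)])
qed

lemma scaled_seq_entropy_le:
  assumes "0 \<le> c"
    and "\<And>n. n \<ge> 1 \<Longrightarrow> c * part_entropy (N 0) (joinN N g Q 0 n) \<le> part_entropy (M 0) (joinN M f P 0 n)"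
  shows "ereal c * seq_entropy N g Q \<le> seq_entropy M f P"
proof -
  let ?a = "\<lambda>n. part_entropy (N 0) (joinN N g Q 0 n) / real n"
  let ?b = "\<lambda>n. part_entropy (M 0) (joinN M f P 0 n) / real n"
  have "c * ?a n \<le> ?b n" for n
  proof (cases "n = 0")
    case False
    then show ?thesis using assms(2)[of n] divide_right_mono[of _ _ "real n"]
      by (simp add: times_divide_eq_right)
  qed simp
  then have "ereal c * ereal (?a n) \<le> ereal (?b n)" for n by simp
  then have "limsup (\<lambda>n. ereal c * ereal (?a n)) \<le> limsup (\<lambda>n. ereal (?b n))"
    by (intro Limsup_mono always_eventually allI)
  then show ?thesis
    unfolding seq_entropy_def by (simp only: limsup_ereal_mult_left[OF assms(1)])
qed

lemma scaled_class_entropy_le: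
  assumes "0 \<le> c" "F \<noteq> {}"
    and "\<And>Q. Q \<in> F \<Longrightarrow> \<exists>P\<in>E. ereal c * seq_entropy N g Q \<le> seq_entropy M f P"
  shows "ereal c * class_entropy N g F \<le> class_entropy M f E"
proof -
  have "ereal c * class_entropy N g F = (SUP Q\<in>F. ereal c * seq_entropy N g Q)"
    unfolding class_entropy_def using assms(2,1) by (rule Sup_ereal_mult_left')
  also have "\<dots> \<le> class_entropy M f E"
    unfolding class_entropy_def using assms(3) by (rule SUP_mono)
  finally show ?thesis .
qed

subsection \<open>Restriction to an invariant part\<close>

lemma admissible_partition: "admissible M f E \<Longrightarrow> P \<in> E \<Longrightarrow> is_partition (M n) (P n)"
  unfolding admissible_def by blast

lemma admissible_nonempty: "admissible M f E \<Longrightarrow> E \<noteq> {}"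
  unfolding admissible_def by blast

lemma admissible_card_bound: "admissible M f E \<Longrightarrow> P \<in> E \<Longrightarrow> \<exists>N::nat. \<forall>n. card (P n) \<le> N"
  unfolding admissible_def by blast

lemma admissible_coarsen:
  assumes "admissible M f E" "P \<in> E" "\<And>n. is_partition (M n) (R n)" "\<And>n. coarser (R n) (P n)"
  shows "R \<in> E"
  using assms(1) unfolding admissible_def using assms(2-4) by blast

lemma admissible_join: "admissible M f E \<Longrightarrow> P \<in> E \<Longrightarrow> m \<ge> 1 \<Longrightarrow> (\<lambda>k. joinN M f P k m) \<in> E"
  unfolding admissible_def by blast

locale invariant_splitting =
  fixes M :: "nat \<Rightarrow> 'a measure" and f :: "nat \<Rightarrow> 'a \<Rightarrow> 'a"
    and Y Z :: "nat \<Rightarrow> 'a set" and c :: real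
  assumes nds: "metric_NDS M f"
    and Y_sets: "\<And>n. Y n \<in> sets (M n)"
    and Y_Z_disjoint: "\<And>n. Y n \<inter> Z n = {}" and Y_Z_cover: "\<And>n. Y n \<union> Z n = space (M n)"
    and f_Y: "\<And>n. f n ` Y n \<subseteq> Y (Suc n)" and f_Z: "\<And>n. f n ` Z n \<subseteq> Z (Suc n)"
    and c_pos: "0 < c" and measure_Y: "\<And>n. measure (M n) (Y n) = c"
begin

definition restricted_measure :: "nat \<Rightarrow> 'a measure" where
  "restricted_measure n = scale_measure (ennreal (1 / c)) (restrict_space (M n) (Y n))"

definition restricted_class :: "(nat \<Rightarrow> 'a set set) set \<Rightarrow> (nat \<Rightarrow> 'a set set) set" where
  "restricted_class E = {Q. \<exists>P\<in>E. \<forall>n. Q n = (\<inter>) (Y n) ` P n}"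

lemma prob_space_M: "prob_space (M n)"
  using nds by (simp add: metric_NDS_def)

lemma c_le_1: "c \<le> 1"
  by (metis measure_Y prob_space.prob_le_1 prob_space_M)

lemma Y_subset_space: "Y n \<subseteq> space (M n)"
  using Y_Z_cover by blast

lemma Z_sets: "Z n \<in> sets (M n)"
proof -
  have "Z n = space (M n) - Y n" using Y_Z_disjoint[of n] Y_Z_cover[of n] by blast
  then show ?thesis using sets.compl_sets[OF Y_sets[of n]] by simp
qed

lemma Y_nonempty: "Y n \<noteq> {}"
  using measure_Y[of n] c_pos by auto

lemma Y_Int_space_sets: "Y n \<inter> space (M n) \<in> sets (M n)"
  using Y_sets Y_subset_space by (simp add: Int_absorb2)

lemma space_restricted_measure [simp]: "space (restricted_measure n) = Y n"
  using Y_subset_space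
  by (auto simp: restricted_measure_def space_scale_measure space_restrict_space)

lemma sets_restricted_measure_iff: "A \<in> sets (restricted_measure n) \<longleftrightarrow> A \<subseteq> Y n \<and> A \<in> sets (M n)"
  using sets_restrict_space_iff[OF Y_Int_space_sets] by (simp add: restricted_measure_def)

lemma emeasure_restricted_measure:
  "A \<subseteq> Y n \<Longrightarrow> emeasure (restricted_measure n) A = ennreal (1 / c) * emeasure (M n) A"
  by (simp add: restricted_measure_def emeasure_restrict_space[OF Y_Int_space_sets])

lemma measure_restricted_measure:
  "A \<subseteq> Y n \<Longrightarrow> measure (restricted_measure n) A = measure (M n) A / c"
  using c_pos by (simp add: restricted_measure_def measure_restrict_space[OF Y_Int_space_sets])

lemma metric_NDS_restricted: "metric_NDS restricted_measure f"
  unfolding metric_NDS_def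
proof (intro conjI allI)
  fix n
  have "emeasure (restricted_measure n) (space (restricted_measure n)) = ennreal (1 / c) * ennreal c"
    using finite_measure.emeasure_eq_measure[OF prob_space.finite_measure[OF prob_space_M]] measure_Y
    by (simp add: emeasure_restricted_measure)
  also have "\<dots> = 1" using c_pos by (simp flip: ennreal_mult)
  finally show "prob_space (restricted_measure n)" by (rule prob_spaceI)
  have f_M: "f n \<in> measurable (M n) (M (Suc n))" using nds by (simp add: metric_NDS_def)
  show f_meas: "f n \<in> measurable (restricted_measure n) (restricted_measure (Suc n))"
    unfolding restricted_measure_def measurable_cong_sets[OF sets_scale_measure sets_scale_measure]
    by (rule measurable_restrict_space3[OF f_M]) (use f_Y in blast)
  show "distr (restricted_measure n) (restricted_measure (Suc n)) (f n) = restricted_measure (Suc n)"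
  proof (rule measure_eqI)
    fix A assume "A \<in> sets (distr (restricted_measure n) (restricted_measure (Suc n)) (f n))"
    then have A: "A \<in> sets (restricted_measure (Suc n))" by simp
    then have A_Y: "A \<subseteq> Y (Suc n)" and A_M: "A \<in> sets (M (Suc n))"
      by (auto simp: sets_restricted_measure_iff)
    text \<open>By invariance of \<open>Z\<close>, the preimage of a subset of \<open>Y\<^sub>n\<^sub>+\<^sub>1\<close> meets no point of \<open>Z\<^sub>n\<close>.\<close>
    have preimage: "f n -` A \<inter> space (M n) = f n -` A \<inter> Y n"
      using A_Y f_Z Y_Z_disjoint Y_Z_cover by blast
    have "emeasure (distr (restricted_measure n) (restricted_measure (Suc n)) (f n)) A
        = ennreal (1 / c) * emeasure (M n) (f n -` A \<inter> space (M n))"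
      by (simp add: emeasure_distr[OF f_meas A] emeasure_restricted_measure preimage)
    also have "\<dots> = ennreal (1 / c) * emeasure (M (Suc n)) A"
      using emeasure_distr[OF f_M A_M] nds by (simp add: metric_NDS_def)
    finally show "emeasure (distr (restricted_measure n) (restricted_measure (Suc n)) (f n)) A
        = emeasure (restricted_measure (Suc n)) A"
      by (simp add: emeasure_restricted_measure A_Y)
  qed simp
qed

lemma is_partition_restrict:
  assumes "is_partition (M n) P"
  shows "is_partition (restricted_measure n) ((\<inter>) (Y n) ` P)"
  unfolding is_partition_def
proof (intro conjI)
  show "finite ((\<inter>) (Y n) ` P)" using assms by (simp add: is_partition_def)
  show "disjoint ((\<inter>) (Y n) ` P)" using assms unfolding is_partition_def disjoint_def by blast
  show "(\<inter>) (Y n) ` P \<subseteq> sets (restricted_measure n)"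
    using assms Y_sets by (auto simp: is_partition_def sets_restricted_measure_iff)
  show "\<Union> ((\<inter>) (Y n) ` P) = space (restricted_measure n)"
    using assms Y_subset_space by (auto simp: is_partition_def)
qed

lemma joinN_restrict:
  "joinN restricted_measure f (\<lambda>k. (\<inter>) (Y k) ` P k) k m = (\<inter>) (Y k) ` joinN M f P k m"
proof -
  have Y_block: "Y k \<inter> (\<Inter>i<m. fiter f k i -` (Y (k + i) \<inter> A i))
      = Y k \<inter> (space (M k) \<inter> (\<Inter>i<m. fiter f k i -` A i))" for A
    unfolding Int_fiter_preimage_invariant[of f Y, OF f_Y]
    by (simp add: Int_assoc[symmetric] Int_absorb2[OF Y_subset_space])
  show ?thesis
  proof (intro equalityI subsetI)
    fix B assume "B \<in> joinN restricted_measure f (\<lambda>k. (\<inter>) (Y k) ` P k) k m"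
    then obtain S where S: "\<forall>i<m. S i \<in> (\<inter>) (Y (k + i)) ` P (k + i)"
      "B = Y k \<inter> (\<Inter>i<m. fiter f k i -` S i)"
      unfolding joinN_def space_restricted_measure by blast
    have "\<forall>i. \<exists>A. i < m \<longrightarrow> A \<in> P (k + i) \<and> S i = Y (k + i) \<inter> A" using S(1) by blast
    then obtain A where A: "\<And>i. i < m \<Longrightarrow> A i \<in> P (k + i) \<and> S i = Y (k + i) \<inter> A i"
      by metis
    have "(\<Inter>i<m. fiter f k i -` S i) = (\<Inter>i<m. fiter f k i -` (Y (k + i) \<inter> A i))"
      by (intro INF_cong refl) (simp add: A)
    then have B: "B = Y k \<inter> (space (M k) \<inter> (\<Inter>i<m. fiter f k i -` A i))"
      using S(2) Y_block by simp
    have "space (M k) \<inter> (\<Inter>i<m. fiter f k i -` A i) \<in> joinN M f P k m"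
      unfolding joinN_def mem_Collect_eq by (intro exI[of _ A] conjI refl allI impI) (simp add: A)
    then show "B \<in> (\<inter>) (Y k) ` joinN M f P k m" unfolding B by (rule imageI)
  next
    fix B assume "B \<in> (\<inter>) (Y k) ` joinN M f P k m"
    then obtain A where A: "\<forall>i<m. A i \<in> P (k + i)"
      "B = Y k \<inter> (space (M k) \<inter> (\<Inter>i<m. fiter f k i -` A i))"
      unfolding joinN_def by blast
    then have "B = Y k \<inter> (\<Inter>i<m. fiter f k i -` (Y (k + i) \<inter> A i))" using Y_block by simp
    moreover have "\<forall>i<m. Y (k + i) \<inter> A i \<in> (\<inter>) (Y (k + i)) ` P (k + i)" using A(1) by blast
    ultimately show "B \<in> joinN restricted_measure f (\<lambda>k. (\<inter>) (Y k) ` P k) k m"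
      unfolding joinN_def space_restricted_measure mem_Collect_eq
      by (intro exI[of _ "\<lambda>i. Y (k + i) \<inter> A i"] conjI) simp_all
  qed
qed

lemma restricted_classE:
  assumes "Q \<in> restricted_class E"
  obtains P where "P \<in> E" "Q = (\<lambda>n. (\<inter>) (Y n) ` P n)"
proof -
  obtain P where "P \<in> E" "\<forall>n. Q n = (\<inter>) (Y n) ` P n"
    using assms unfolding restricted_class_def by blast
  then show thesis using that[of P] by (simp add: fun_eq_iff)
qed

lemma restricted_classI: "P \<in> E \<Longrightarrow> (\<lambda>n. (\<inter>) (Y n) ` P n) \<in> restricted_class E"
  unfolding restricted_class_def by (intro CollectI bexI[of _ P]) simp_all

lemma restricted_class_coarsen:
  assumes adm: "admissible M f E" and E_split: "\<And>P. P \<in> E \<Longrightarrow> (\<lambda>n. pjoin (P n) {Y n, Z n}) \<in> E"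
    and Q: "Q \<in> restricted_class E"
    and Q': "\<And>n. is_partition (restricted_measure n) (Q' n)" "\<And>n. coarser (Q' n) (Q n)"
  shows "Q' \<in> restricted_class E"
proof -
  obtain P where P: "P \<in> E" "Q = (\<lambda>n. (\<inter>) (Y n) ` P n)"
    using Q by (rule restricted_classE)
  have Q'_props: "finite (Q' n)" "disjoint (Q' n)" "\<Union> (Q' n) = Y n" "Q' n \<subseteq> sets (M n)" for n
    using Q'(1)[of n] by (auto simp: is_partition_def sets_restricted_measure_iff)
  have "(\<lambda>n. glue_block (Z n) (Q' n)) \<in> E"
  proof (rule admissible_coarsen[OF adm E_split[OF P(1)]])
    show "is_partition (M n) (glue_block (Z n) (Q' n))" for n
      using Q'_props[of n] Y_nonempty[of n] Z_sets[of n] Y_Z_disjoint[of n] Y_Z_cover[of n]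
      by (intro is_partition_glue_block[where Y = "Y n"]) auto
    show "coarser (glue_block (Z n) (Q' n)) (pjoin (P n) {Y n, Z n})" for n
      using Q'(2)[of n] Q'_props(3)[of n] Y_nonempty[of n] unfolding P(2)
      by (intro coarser_glue_block) auto
  qed
  then have "(\<lambda>n. (\<inter>) (Y n) ` glue_block (Z n) (Q' n)) \<in> restricted_class E"
    by (rule restricted_classI)
  moreover have "(\<inter>) (Y n) ` glue_block (Z n) (Q' n) = Q' n" for n
    using Q'_props(3)[of n] Y_Z_disjoint[of n] by (simp add: Int_glue_block)
  ultimately show ?thesis by simp
qed

lemma admissible_restricted_class:
  assumes adm: "admissible M f E" and E_split: "\<And>P. P \<in> E \<Longrightarrow> (\<lambda>n. pjoin (P n) {Y n, Z n}) \<in> E"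
  shows "admissible restricted_measure f (restricted_class E)"
  unfolding admissible_def
proof (intro conjI ballI allI impI)
  obtain P where "P \<in> E" using admissible_nonempty[OF adm] by blast
  then show "restricted_class E \<noteq> {}" using restricted_classI by blast
next
  fix Q n assume "Q \<in> restricted_class E"
  then obtain P where P: "P \<in> E" "Q = (\<lambda>n. (\<inter>) (Y n) ` P n)" by (rule restricted_classE)
  show "is_partition (restricted_measure n) (Q n)"
    unfolding P(2) by (intro is_partition_restrict admissible_partition[OF adm P(1)])
next
  fix Q assume "Q \<in> restricted_class E"
  then obtain P where P: "P \<in> E" "Q = (\<lambda>n. (\<inter>) (Y n) ` P n)" by (rule restricted_classE)
  obtain N where N: "\<And>n. card (P n) \<le> N" using admissible_card_bound[OF adm P(1)] by blast
  have "card (Q n) \<le> N" for n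
    unfolding P(2) using card_image_le[of "P n" "(\<inter>) (Y n)"] N[of n]
      admissible_partition[OF adm P(1), of n] by (simp add: is_partition_def)
  then show "\<exists>N. \<forall>n. card (Q n) \<le> N" by blast
next
  fix Q Q' assume Q: "Q \<in> restricted_class E"
    and "\<forall>n. is_partition (restricted_measure n) (Q' n) \<and> coarser (Q' n) (Q n)"
  then show "Q' \<in> restricted_class E"
    by (intro restricted_class_coarsen[OF adm E_split Q]) auto
next
  fix Q and m :: nat assume "Q \<in> restricted_class E" "m \<ge> 1"
  from \<open>Q \<in> restricted_class E\<close> obtain P where P: "P \<in> E" "Q = (\<lambda>n. (\<inter>) (Y n) ` P n)"
    by (rule restricted_classE)
  have "(\<lambda>k. joinN M f P k m) \<in> E" using admissible_join[OF adm P(1) \<open>m \<ge> 1\<close>] .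
  then show "(\<lambda>k. joinN restricted_measure f Q k m) \<in> restricted_class E"
    unfolding P(2) joinN_restrict by (rule restricted_classI)
qed

lemma scaled_part_entropy_restricted_le:
  assumes "n \<ge> 1" "\<And>k. finite (R k)" "\<And>k. (\<inter>) (Y k) ` P k \<subseteq> R k"
  shows "c * part_entropy (restricted_measure 0) (joinN restricted_measure f (\<lambda>k. (\<inter>) (Y k) ` P k) 0 n)
    \<le> part_entropy (M 0) (joinN M f R 0 n)"
proof -
  let ?J = "joinN restricted_measure f (\<lambda>k. (\<inter>) (Y k) ` P k) 0 n"
  have "?J = joinN M f (\<lambda>k. (\<inter>) (Y k) ` P k) 0 n"
    using assms(1) Y_subset_space by (intro joinN_cong_space) auto
  also have "\<dots> \<subseteq> joinN M f R 0 n" using assms(3) by (rule joinN_mono)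
  finally have sub: "?J \<subseteq> joinN M f R 0 n" .
  have "c * part_entropy (restricted_measure 0) ?J \<le> part_entropy (M 0) ?J"
    using c_pos c_le_1 joinN_subset_space[of _ restricted_measure]
    by (intro part_entropy_scale) (auto simp: measure_restricted_measure)
  also have "\<dots> \<le> part_entropy (M 0) (joinN M f R 0 n)"
    using sub assms(2) by (intro prob_space.part_entropy_mono prob_space_M finite_joinN)
  finally show ?thesis .
qed

text \<open>When \<open>c = 1\<close> the complement \<open>Z\<^sub>n\<close> is a null set.\<close>

lemma measure_Int_Y_eq:
  assumes "c = 1" "B \<in> sets (M n)"
  shows "measure (M n) (Y n \<inter> B) = measure (M n) B"
proof -
  interpret prob_space "M n" by (rule prob_space_M)
  have "Z n = space (M n) - Y n" using Y_Z_disjoint[of n] Y_Z_cover[of n] by blast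
  then have "Z n \<in> null_sets (M n)"
    using prob_compl[OF Y_sets[of n]] measure_Y[of n] assms(1) sets.compl_sets[OF Y_sets[of n]]
    by (simp add: null_sets_def emeasure_eq_measure)
  moreover have "Y n \<inter> B = B - Z n"
    using sets.sets_into_space[OF assms(2)] Y_Z_disjoint[of n] Y_Z_cover[of n] by blast
  ultimately show ?thesis using assms(2) by (simp add: measure_Diff_null_set)
qed

lemma part_entropy_le_restricted:
  assumes "c = 1" "\<And>k. is_partition (M k) (P k)"
  shows "part_entropy (M 0) (joinN M f P 0 n)
    \<le> part_entropy (restricted_measure 0) (joinN restricted_measure f (\<lambda>k. (\<inter>) (Y k) ` P k) 0 n)"
proof -
  let ?J = "joinN M f P 0 n"
  have fin: "finite ?J" using assms(2) by (intro finite_joinN) (simp add: is_partition_def)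
  have sets: "B \<in> sets (M 0)" if "B \<in> ?J" for B
    using that assms(2) by (intro joinN_in_sets[OF nds]) (auto simp: is_partition_def)
  have "inj_on ((\<inter>) (Y 0)) {B \<in> ?J. measure (M 0) B \<noteq> 0}"
  proof (rule inj_onI)
    fix B1 B2 assume B: "B1 \<in> {B \<in> ?J. measure (M 0) B \<noteq> 0}" "B2 \<in> {B \<in> ?J. measure (M 0) B \<noteq> 0}"
      and eq: "Y 0 \<inter> B1 = Y 0 \<inter> B2"
    have "disjoint ?J" using assms(2) by (intro disjoint_joinN) (simp add: is_partition_def)
    moreover have "Y 0 \<inter> B1 \<noteq> {}" using B(1) sets measure_Int_Y_eq[OF assms(1)] by force
    ultimately show "B1 = B2" using B eq by (auto simp: disjoint_def)
  qed
  then have "part_entropy (M 0) ?J \<le> part_entropy (M 0) ((\<inter>) (Y 0) ` ?J)"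
    using fin sets measure_Int_Y_eq[OF assms(1)]
    by (intro prob_space.part_entropy_le_image[OF prob_space_M]) auto
  also have "\<dots> = part_entropy (restricted_measure 0) ((\<inter>) (Y 0) ` ?J)"
  proof -
    have "measure (restricted_measure 0) A = measure (M 0) A" if "A \<subseteq> Y 0" for A
      using measure_restricted_measure[OF that] assms(1) by simp
    then show ?thesis unfolding part_entropy_sum by (intro sum.cong refl) auto
  qed
  finally show ?thesis by (simp only: joinN_restrict)
qed

lemma restricted_class_entropy_le:
  assumes adm: "admissible M f E" and E_split: "\<And>P. P \<in> E \<Longrightarrow> (\<lambda>n. pjoin (P n) {Y n, Z n}) \<in> E"
  shows "ereal c * class_entropy restricted_measure f (restricted_class E) \<le> class_entropy M f E"
proof (rule scaled_class_entropy_le)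
  show "restricted_class E \<noteq> {}"
    using admissible_nonempty[OF admissible_restricted_class[OF adm E_split]] .
  fix Q assume "Q \<in> restricted_class E"
  then obtain P where P: "P \<in> E" "Q = (\<lambda>n. (\<inter>) (Y n) ` P n)" by (rule restricted_classE)
  have "finite (pjoin (P k) {Y k, Z k})" for k
    using admissible_partition[OF adm E_split[OF P(1)]] by (simp add: is_partition_def)
  moreover have "(\<inter>) (Y k) ` P k \<subseteq> pjoin (P k) {Y k, Z k}" for k
    unfolding pjoin_def by blast
  ultimately have
    "ereal c * seq_entropy restricted_measure f Q \<le> seq_entropy M f (\<lambda>n. pjoin (P n) {Y n, Z n})"
    unfolding P(2) using c_pos
    by (intro scaled_seq_entropy_le scaled_part_entropy_restricted_le) simp_all
  then show "\<exists>P\<in>E. ereal c * seq_entropy restricted_measure f Q \<le> seq_entropy M f P"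
    using E_split[OF P(1)] by blast
qed (use c_pos in simp)

lemma class_entropy_le_restricted:
  assumes "c = 1" and adm: "admissible M f E"
  shows "class_entropy M f E \<le> class_entropy restricted_measure f (restricted_class E)"
proof -
  have "ereal 1 * class_entropy M f E \<le> class_entropy restricted_measure f (restricted_class E)"
  proof (rule scaled_class_entropy_le)
    fix P assume "P \<in> E"
    then have "ereal 1 * seq_entropy M f P \<le> seq_entropy restricted_measure f (\<lambda>n. (\<inter>) (Y n) ` P n)"
      using part_entropy_le_restricted[OF \<open>c = 1\<close> admissible_partition[OF adm]]
      by (intro scaled_seq_entropy_le) auto
    then show "\<exists>Q\<in>restricted_class E. ereal 1 * seq_entropy M f P \<le> seq_entropy restricted_measure f Q"
      using restricted_classI[OF \<open>P \<in> E\<close>] by blast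
  qed (use admissible_nonempty[OF adm] in simp_all)
  then show ?thesis by simp
qed

end

theorem mainTheorem6:
  fixes M :: "nat \<Rightarrow> 'a measure" and f :: "nat \<Rightarrow> 'a \<Rightarrow> 'a"
    and Y Z :: "nat \<Rightarrow> 'a set" and c :: real
    and E :: "(nat \<Rightarrow> 'a set set) set"
  assumes nds: "metric_NDS M f"
    and Ymeas: "\<And>n. Y n \<in> sets (M n)" and Zmeas: "\<And>n. Z n \<in> sets (M n)"
    and disj: "\<And>n. Y n \<inter> Z n = {}" and cover: "\<And>n. Y n \<union> Z n = space (M n)"
    and fY: "\<And>n. f n ` Y n \<subseteq> Y (Suc n)" and fZ: "\<And>n. f n ` Z n \<subseteq> Z (Suc n)"
    and c_pos: "0 < c" and c_le: "c \<le> 1"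
    and muY: "\<And>n. measure (M n) (Y n) = c"
    and adm: "admissible M f E"
    and EYZ: "\<And>P. P \<in> E \<Longrightarrow> (\<lambda>n. pjoin (P n) {Y n, Z n}) \<in> E"
  defines "\<nu> \<equiv> (\<lambda>n. scale_measure (ennreal (1 / c)) (restrict_space (M n) (Y n)))"
    and "EY \<equiv> {Q. \<exists>P\<in>E. \<forall>n. Q n = {Y n \<inter> A | A. A \<in> P n}}"
  shows "metric_NDS \<nu> f \<and> admissible \<nu> f EY
         \<and> ereal c * class_entropy \<nu> f EY \<le> class_entropy M f E
         \<and> (c = 1 \<longrightarrow> ereal c * class_entropy \<nu> f EY = class_entropy M f E)"
proof -
  \<comment> \<open>\<open>c \<le> 1\<close> and the measurability of \<open>Z\<^sub>n\<close> follow from the other hypotheses.\<close>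
  interpret invariant_splitting M f Y Z c
    using nds Ymeas disj cover fY fZ c_pos muY by unfold_locales
  have "\<nu> = restricted_measure" unfolding \<nu>_def restricted_measure_def ..
  moreover have "EY = restricted_class E"
    unfolding EY_def restricted_class_def by (simp add: image_def Setcompr_eq_image)
  ultimately show ?thesis
    using metric_NDS_restricted admissible_restricted_class[OF adm EYZ]
      restricted_class_entropy_le[OF adm EYZ] class_entropy_le_restricted[OF _ adm]
    by (auto intro: antisym)
qed

end
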